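(* Let $k\ge 2$, let $F$ be a $k$-partite $k$-graph with $\gcd(\mathcal{S}(F))=1$ and $v(F)=f$, and suppose $1/n\ll\mu\ll\lambda\ll p,\zeta<1$. If $H$ is an $(n,p,\mu,\cdot)$ $k$-graph and $\mathcal{P}=\{X,Y\}$ is a partition of $V(H)$ with $|X|,|Y|\ge\zeta n$, then $(1,-1)\in L^\lambda_{\mathcal{P},F}(H)$.
   Context: The notation $a\ll b$ in a hierarchy means the statement holds whenever constants are chosen from right to left, each sufficiently small (and $n$ sufficiently large) in terms of those to its right (and of $F$, $k$). A $k$-partite realisation of a $k$-graph $F$ is a partition of $V(F)$ into classes $V_1,\dots,V_k$ with $|e\cap V_i|=1$ for all $e\in E(F)$, $i\in[k]$; $F$ is $k$-partite if it has one. $\mathcal{S}(F)=\bigcup_\chi\{|V_1|,\dots,|V_k|\}$, the union over all $k$-partite realisations $\chi=(V_1,\dots,V_k)$ of $F$. An $(n,p,\mu,\cdot)$ $k$-graph is a $k$-graph $H$ on a vertex set $V$ with $|V|=n$ such that for all $X_1,\dots,X_k\subseteq V$, the number of $k$-tuples $(x_1,\dots,x_k)\in X_1\times\cdots\times X_k$ with $\{x_1,\dots,x_k\}\in E(H)$ is at least $p|X_1|\cdots|X_k|-\mu n^k$. For a partition $\mathcal{P}=\{X,Y\}$ of $V(H)$ and $S\subseteq V(H)$, $\mathbf{i}_{\mathcal{P}}(S)=(|S\cap X|,|S\cap Y|)$. For $\lambda>0$, a vector $\mathbf{v}\in\mathbb{Z}^2$ with nonnegative coordinates summing to $f$ is a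 $\lambda$-robust $F$-vector if at least $\lambda n^f$ copies $F'$ of $F$ in $H$ have $\mathbf{i}_{\mathcal{P}}(V(F'))=\mathbf{v}$; $L^\lambda_{\mathcal{P},F}(H)$ is the lattice generated by all $\lambda$-robust $F$-vectors. *)

theory Defs
  imports Complex_Main "HOL-Library.FuncSet"
begin

definition is_kgraph :: "nat \<Rightarrow> 'a set \<Rightarrow> 'a set set \<Rightarrow> bool" where
  "is_kgraph k V E \<longleftrightarrow> finite V \<and> (\<forall>e\<in>E. e \<subseteq> V \<and> card e = k)"

definition kpartite_realisation :: "nat \<Rightarrow> 'b set \<Rightarrow> 'b set set \<Rightarrow> ('b \<Rightarrow> nat) \<Rightarrow> bool" where
  "kpartite_realisation k VF EF c \<longleftrightarrow>
     (\<forall>v\<in>VF. c v < k) \<and> (\<forall>e\<in>EF. \<forall>i<k. card {v\<in>e. c v = i} = 1)"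

definition is_kpartite :: "nat \<Rightarrow> 'b set \<Rightarrow> 'b set set \<Rightarrow> bool" where
  "is_kpartite k VF EF \<longleftrightarrow> (\<exists>c. kpartite_realisation k VF EF c)"

definition class_sizes :: "nat \<Rightarrow> 'b set \<Rightarrow> 'b set set \<Rightarrow> nat set" where
  "class_sizes k VF EF =
     {card {v\<in>VF. c v = i} | c i. kpartite_realisation k VF EF c \<and> i < k}"

definition npmu_graph :: "nat \<Rightarrow> nat \<Rightarrow> real \<Rightarrow> real \<Rightarrow> 'a set \<Rightarrow> 'a set set \<Rightarrow> bool" where
  "npmu_graph k n p \<mu> V E \<longleftrightarrow> is_kgraph k V E \<and> card V = n \<and>
     (\<forall>Xs. (\<forall>i<k. Xs i \<subseteq> V) \<longrightarrow>
        real (card {x \<in> Pi\<^sub>E {..<k} Xs. x ` {..<k} \<in> E})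
          \<ge> p * (\<Prod>i<k. real (card (Xs i))) - \<mu> * real n ^ k)"

definition copies :: "'b set \<Rightarrow> 'b set set \<Rightarrow> 'a set \<Rightarrow> 'a set set \<Rightarrow> ('a set \<times> 'a set set) set" where
  "copies VF EF V E = {(V', E'). V' \<subseteq> V \<and> E' \<subseteq> E \<and>
       (\<exists>\<phi>. bij_betw \<phi> VF V' \<and> E' = (\<lambda>e. \<phi> ` e) ` EF)}"

definition robust_vectors ::
  "real \<Rightarrow> 'b set \<Rightarrow> 'b set set \<Rightarrow> 'a set \<Rightarrow> 'a set set \<Rightarrow> 'a set \<Rightarrow> 'a set \<Rightarrow> (int \<times> int) set" where
  "robust_vectors lam VF EF V E X Y =
     {(int a, int b) | a b. a + b = card VF \<and>
        real (card {F' \<in> copies VF EF V E. card (fst F' \<inter> X) = a \<and> card (fst F' \<inter> Y) = b})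
          \<ge> lam * real (card V) ^ card VF}"

definition int_lattice :: "(int \<times> int) set \<Rightarrow> (int \<times> int) set" where
  "int_lattice S = {((\<Sum>v\<in>T. c v * fst v), (\<Sum>v\<in>T. c v * snd v)) | T c. finite T \<and> T \<subseteq> S}"

end

theory Submission
  imports Defs "HOL-Analysis.Convex" "HOL-Computational_Algebra.Group_Closure"
begin

text \<open>Fix a \<open>k\<close>-partite realisation \<open>c\<close> of \<open>F\<close> and a set \<open>J\<close> of classes, and send the
  classes in \<open>J\<close> to \<open>X\<close> and the others to \<open>Y\<close>. By the density condition, at least a
  \<open>p/2\<close>-fraction of the \<open>k\<close>-tuples with one vertex in each chosen part are edges of \<open>H\<close>, so
  iterating Jensen's inequality over the parts (supersaturation)
  yields \<open>\<Omega>(n\<^sup>f)\<close> copies of the complete \<open>k\<close>-partite \<open>k\<close>-graph with parts of sizes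
  \<open>|c\<^sup>-\<^sup>1(i)|\<close>, each of which contains a homomorphic image of \<open>F\<close> respecting the parts.
  At most \<open>O(n\<^sup>f\<^sup>-\<^sup>1)\<close> maps \<open>V(F) \<rightarrow> V(H)\<close> are not injective and each copy comes from at
  most \<open>f\<^sup>f\<close> embeddings, so \<open>\<Omega>(n\<^sup>f)\<close> copies of \<open>F\<close> have exactly
  \<open>|c\<^sup>-\<^sup>1(J)|\<close> vertices in \<open>X\<close>. Hence these profiles are \<open>\<lambda>\<close>-robust; the choices
  \<open>J = {i}\<close> and \<open>J = {}\<close> put \<open>(|V\<^sub>i|, -|V\<^sub>i|)\<close> into the lattice for every class size,
  and \<open>gcd S(F) = 1\<close> gives \<open>(1, -1)\<close>.\<close>

section \<open>Lists as Cartesian products\<close>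

lemma set_Cons_eq_image: "set_Cons A XS = (\<lambda>(x, xs). x # xs) ` (A \<times> XS)"
  by (auto simp: set_Cons_def)

lemma listset_iff: "ys \<in> listset Zs \<longleftrightarrow> list_all2 (\<in>) ys Zs"
  by (induction Zs arbitrary: ys) (auto simp: set_Cons_def list_all2_Cons2)

lemma card_listset: "card (listset Zs) = prod_list (map card Zs)"
proof (induction Zs)
  case (Cons Z Zs)
  have "inj_on (\<lambda>(x, xs). x # xs) (Z \<times> listset Zs)" by (auto simp: inj_on_def)
  then show ?case using Cons by (simp add: set_Cons_eq_image card_image card_cartesian_product)
qed simp

lemma finite_listset: "\<forall>Z\<in>set Zs. finite Z \<Longrightarrow> finite (listset Zs)"
  by (induction Zs) (auto simp: set_Cons_eq_image)

lemma bij_betw_map_upt_PiE: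
  "bij_betw (\<lambda>x. map x [0..<k]) (Pi\<^sub>E {..<k} Z) (listset (map Z [0..<k]))"
proof (rule bij_betw_byWitness[where f' = "\<lambda>ys. \<lambda>i\<in>{..<k}. ys ! i"])
  show "\<forall>x\<in>Pi\<^sub>E {..<k} Z. (\<lambda>i\<in>{..<k}. map x [0..<k] ! i) = x"
    by (intro ballI ext) (auto simp: PiE_iff extensional_def)
  show "\<forall>ys\<in>listset (map Z [0..<k]). map (\<lambda>i\<in>{..<k}. ys ! i) [0..<k] = ys"
    by (auto simp: listset_iff list_all2_conv_all_nth intro!: nth_equalityI)
  show "(\<lambda>x. map x [0..<k]) ` Pi\<^sub>E {..<k} Z \<subseteq> listset (map Z [0..<k])"
    by (clarsimp simp: listset_iff list_all2_conv_all_nth PiE_iff)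
  show "(\<lambda>ys. \<lambda>i\<in>{..<k}. ys ! i) ` listset (map Z [0..<k]) \<subseteq> Pi\<^sub>E {..<k} Z"
    by (clarsimp simp: listset_iff list_all2_conv_all_nth PiE_iff)
qed

lemma prod_list_map_upt_eq_prod_lessThan: "prod_list (map f [0..<k]) = (\<Prod>i<k. f i)"
  by (simp add: prod.distinct_set_conv_list[symmetric] atLeast0LessThan)

lemma card_listset_filter_set_eq_card_PiE:
  "card {ys \<in> listset (map Z [0..<k]). P (set ys)} = card {x \<in> Pi\<^sub>E {..<k} Z. P (x ` {..<k})}"
proof -
  have bij: "bij_betw (\<lambda>x. map x [0..<k]) (Pi\<^sub>E {..<k} Z) (listset (map Z [0..<k]))"
    by (rule bij_betw_map_upt_PiE)
  have "{ys \<in> listset (map Z [0..<k]). P (set ys)}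
      = (\<lambda>x. map x [0..<k]) ` {x \<in> Pi\<^sub>E {..<k} Z. P (set (map x [0..<k]))}"
    unfolding bij_betw_imp_surj_on[OF bij, symmetric] by blast
  then show ?thesis
    by (simp add: card_image inj_on_subset[OF bij_betw_imp_inj_on[OF bij]] atLeast0LessThan)
qed

section \<open>Counting complete partite blow-ups\<close>

lemma card_mult_power_mean_le_sum_power:
  fixes a :: "'c \<Rightarrow> real"
  assumes "finite A" "A \<noteq> {}" "\<And>x. x \<in> A \<Longrightarrow> a x \<ge> 0"
  shows "real (card A) * ((\<Sum>x\<in>A. a x) / real (card A)) ^ n \<le> (\<Sum>x\<in>A. a x ^ n)"
proof -
  have convex: "convex_on {0::real..} (\<lambda>x. x ^ n)"
    by (cases "even n") (auto intro: convex_power_odd convex_on_subset[OF convex_power_even])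
  have A: "card A > 0" using assms by (simp add: card_gt_0_iff)
  have "(\<Sum>x\<in>A. (1 / real (card A)) *\<^sub>R a x) ^ n \<le> (\<Sum>x\<in>A. (1 / real (card A)) * a x ^ n)"
    using convex_on_sum[OF assms(1,2) convex, where a = "\<lambda>_. 1 / real (card A)" and y = a] assms A
    by auto
  then have "((\<Sum>x\<in>A. a x) / real (card A)) ^ n \<le> (\<Sum>x\<in>A. a x ^ n) / real (card A)"
    by (simp add: sum_divide_distrib[symmetric] sum_distrib_left[symmetric] sum_distrib_right[symmetric]
        divide_inverse mult.commute)
  then show ?thesis using A by (simp add: field_simps)
qed

definition words :: "'a set \<Rightarrow> nat \<Rightarrow> 'a list set" where
  "words Z s = {l. set l \<subseteq> Z \<and> length l = s}"

lemma finite_words: "finite Z \<Longrightarrow> finite (words Z s)"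
  by (simp add: words_def finite_lists_length_eq)

lemma card_words: "finite Z \<Longrightarrow> card (words Z s) = card Z ^ s"
  by (simp add: words_def card_lists_length_eq)

definition common_link :: "'a list set \<Rightarrow> 'a list \<Rightarrow> 'a list set" where
  "common_link G l = {ys. \<forall>x\<in>set l. x # ys \<in> G}"

definition density :: "'a list set \<Rightarrow> 'a set list \<Rightarrow> real" where
  "density G Zs = real (card (G \<inter> listset Zs)) / real (card (listset Zs))"

lemma density_nonneg: "0 \<le> density G Zs"
  by (simp add: density_def)

lemma density_le_1: "finite (listset Zs) \<Longrightarrow> density G Zs \<le> 1"
  unfolding density_def by (simp add: divide_le_eq_1 card_mono card_gt_0_iff)

text \<open>\<open>blowups G [Z\<^sub>1, \<dots>, Z\<^sub>r] [s\<^sub>1, \<dots>, s\<^sub>r]\<close> is the set of tuples \<open>[l\<^sub>1, \<dots>, l\<^sub>r]\<close> of lists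
  \<open>l\<^sub>i \<in> words Z\<^sub>i s\<^sub>i\<close> all of whose transversals \<open>[l\<^sub>1 ! j\<^sub>1, \<dots>, l\<^sub>r ! j\<^sub>r]\<close> lie in \<open>G\<close>
  (see \<open>transversals_in_blowups\<close>): labelled copies of the complete \<open>r\<close>-partite
  \<open>r\<close>-graph with parts of sizes \<open>s\<^sub>i\<close>.\<close>
fun blowups :: "'a list set \<Rightarrow> 'a set list \<Rightarrow> nat list \<Rightarrow> 'a list list set" where
  "blowups G [] ss = (if [] \<in> G then {[]} else {})"
| "blowups G (Z # Zs) ss = (\<Union>l \<in> words Z (hd ss). (#) l ` blowups (common_link G l) Zs (tl ss))"

lemma finite_blowups: "\<forall>Z\<in>set Zs. finite Z \<Longrightarrow> finite (blowups G Zs ss)"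
  by (induction Zs arbitrary: G ss) (auto simp: finite_words)

lemma card_blowups_Cons:
  assumes "\<forall>Z'\<in>set (Z # Zs). finite Z'"
  shows "card (blowups G (Z # Zs) ss) = (\<Sum>l\<in>words Z (hd ss). card (blowups (common_link G l) Zs (tl ss)))"
  unfolding blowups.simps
  using assms finite_blowups[of Zs] by (subst card_UN_disjoint) (auto simp: finite_words card_image)

lemma transversals_in_blowups:
  assumes "length ss = length Zs" "g \<in> blowups G Zs ss"
  shows "list_all2 (\<lambda>l (Z, s). l \<in> words Z s) g (zip Zs ss)"
    and "\<And>\<sigma>. list_all2 (<) \<sigma> ss \<Longrightarrow> map2 (!) g \<sigma> \<in> G"
  using assms
proof (induction Zs arbitrary: G ss g)
  case Nil
  { case 1 then show ?case by (simp split: if_splits) }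
  { case 2 then show ?case by (simp split: if_splits) }
next
  case (Cons Z Zs)
  { case 1
    then obtain s ss' l g' where "ss = s # ss'" "g = l # g'" "l \<in> words Z s"
      "g' \<in> blowups (common_link G l) Zs ss'" by (cases ss) auto
    then show ?case using Cons.IH(1) 1 by simp }
  { case (2 \<sigma>)
    then obtain s ss' l g' j \<sigma>' where ss: "ss = s # ss'" "g = l # g'" "l \<in> words Z s"
      "g' \<in> blowups (common_link G l) Zs ss'" "\<sigma> = j # \<sigma>'" "j < s" "list_all2 (<) \<sigma>' ss'"
      by (cases ss; cases \<sigma>) auto
    then have "map2 (!) g' \<sigma>' \<in> common_link G l" using Cons.IH(2) 2 by simp
    moreover have "l ! j \<in> set l" using ss by (simp add: words_def)
    ultimately show ?case using ss by (simp add: common_link_def) }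
qed

lemma card_Int_eq_sum_indicator: "finite P \<Longrightarrow> card (A \<inter> P) = (\<Sum>y\<in>P. if y \<in> A then 1 else 0)"
  by (simp add: sum.inter_restrict[symmetric] Int_commute)

lemma sum_card_common_link_Int:
  assumes "finite Z" "finite P"
  shows "(\<Sum>l\<in>words Z s. card (common_link G l \<inter> P)) = (\<Sum>ys\<in>P. card {x\<in>Z. x # ys \<in> G} ^ s)"
proof -
  have "(\<Sum>l\<in>words Z s. card (common_link G l \<inter> P))
      = (\<Sum>ys\<in>P. \<Sum>l\<in>words Z s. if ys \<in> common_link G l then 1 else 0)"
    using assms(2) by (simp add: card_Int_eq_sum_indicator sum.swap[of _ P])
  also have "\<dots> = (\<Sum>ys\<in>P. card (words {x\<in>Z. x # ys \<in> G} s))"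
  proof (rule sum.cong)
    fix ys
    have "{l \<in> words Z s. ys \<in> common_link G l} = words {x\<in>Z. x # ys \<in> G} s"
      by (auto simp: words_def common_link_def)
    then show "(\<Sum>l\<in>words Z s. if ys \<in> common_link G l then 1 else 0) = card (words {x\<in>Z. x # ys \<in> G} s)"
      using card_Int_eq_sum_indicator[OF finite_words[OF assms(1)], of "{l. ys \<in> common_link G l}" s]
      by (simp add: Int_def conj_commute)
  qed simp
  also have "\<dots> = (\<Sum>ys\<in>P. card {x\<in>Z. x # ys \<in> G} ^ s)"
    using assms by (simp add: card_words)
  finally show ?thesis .
qed

lemma card_Int_listset_Cons:
  assumes "\<forall>Z'\<in>set (Z # Zs). finite Z'"
  shows "card (G \<inter> listset (Z # Zs)) = (\<Sum>ys\<in>listset Zs. card {x\<in>Z. x # ys \<in> G})"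
proof -
  have "G \<inter> listset (Z # Zs) = (\<lambda>(ys, x). x # ys) ` (SIGMA ys:listset Zs. {x\<in>Z. x # ys \<in> G})"
    by (auto simp: set_Cons_def)
  moreover have "inj_on (\<lambda>(ys, x). x # ys) (SIGMA ys:listset Zs. {x\<in>Z. x # ys \<in> G})"
    by (auto simp: inj_on_def)
  ultimately show ?thesis
    using assms finite_listset[of Zs] by (simp add: card_image card_SigmaI)
qed

lemma density_power_le_sum_density_common_link:
  assumes "\<forall>Z'\<in>set (Z # Zs). finite Z' \<and> Z' \<noteq> {}"
  shows "real (card Z) ^ s * density G (Z # Zs) ^ s \<le> (\<Sum>l\<in>words Z s. density (common_link G l) Zs)"
proof -
  define P where "P = listset Zs"
  define deg where "deg ys = real (card {x\<in>Z. x # ys \<in> G})" for ys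
  have finite: "\<forall>Z'\<in>set (Z # Zs). finite Z'" using assms by simp
  then have fin: "finite Z" "finite P" using finite_listset[of Zs] by (auto simp: P_def)
  have P: "real (card P) > 0"
    using assms by (auto simp: P_def card_listset prod_list_zero_iff card_gt_0_iff)
  have Z: "real (card Z) > 0" using assms fin by (simp add: card_gt_0_iff)
  have "real (card Z) * density G (Z # Zs) = (\<Sum>ys\<in>P. deg ys) / real (card P)"
    using Z card_listset[of "Z # Zs"]
    unfolding density_def card_Int_listset_Cons[OF finite]
    by (simp add: P_def deg_def card_listset del: listset.simps)
  also have "\<dots> ^ s \<le> (\<Sum>ys\<in>P. deg ys ^ s) / real (card P)"
    using card_mult_power_mean_le_sum_power[of P deg s] fin P
    by (simp add: field_simps deg_def card_gt_0_iff)
  also have "\<dots> = (\<Sum>l\<in>words Z s. density (common_link G l) Zs)"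
    using arg_cong[OF sum_card_common_link_Int[OF fin, of G s], of real]
    by (simp add: density_def P_def deg_def sum_divide_distrib[symmetric])
  finally show ?thesis by (simp add: power_mult_distrib)
qed

lemma density_power_mult_le_card_blowups:
  assumes "length ss = length Zs" "\<forall>Z\<in>set Zs. finite Z \<and> Z \<noteq> {}"
  shows "density G Zs ^ prod_list ss * (\<Prod>(Z, s)\<leftarrow>zip Zs ss. real (card Z) ^ s)
           \<le> real (card (blowups G Zs ss))"
  using assms
proof (induction Zs arbitrary: G ss)
  case Nil
  then show ?case by (simp add: density_def)
next
  case (Cons Z Zs)
  obtain s ss' where ss: "ss = s # ss'" and len: "length ss' = length Zs"
    using Cons.prems by (cases ss) auto
  define L where "L = words Z s"
  define T where "T = prod_list ss'"
  define W where "W = (\<Prod>(Z, s)\<leftarrow>zip Zs ss'. real (card Z) ^ s)"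
  define a where "a l = density (common_link G l) Zs" for l
  have Z: "finite Z" "card Z > 0" using Cons.prems by (auto simp: card_gt_0_iff)
  then have L: "finite L" "real (card L) = real (card Z) ^ s" "L \<noteq> {}"
    using card_words[of Z s] by (auto simp: L_def finite_words)
  have "W \<ge> 0" unfolding W_def by (rule prod_list_nonneg) auto
  have "density G (Z # Zs) ^ s \<le> (\<Sum>l\<in>L. a l) / real (card L)"
    using density_power_le_sum_density_common_link[of Z Zs s G] Cons.prems Z(2)
    unfolding L(2) by (simp add: a_def L_def pos_le_divide_eq mult.commute)
  then have "real (card L) * (density G (Z # Zs) ^ s) ^ T
      \<le> real (card L) * ((\<Sum>l\<in>L. a l) / real (card L)) ^ T"
    by (intro mult_left_mono power_mono) (simp_all add: density_nonneg)
  also have "\<dots> \<le> (\<Sum>l\<in>L. a l ^ T)"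
    using card_mult_power_mean_le_sum_power[of L a T] L by (simp add: a_def density_nonneg)
  finally have "real (card L) * (density G (Z # Zs) ^ s) ^ T * W \<le> (\<Sum>l\<in>L. a l ^ T * W)"
    using \<open>W \<ge> 0\<close> by (simp add: mult_right_mono flip: sum_distrib_right)
  also have "\<dots> \<le> (\<Sum>l\<in>L. real (card (blowups (common_link G l) Zs ss')))"
    using Cons.IH[OF len] Cons.prems by (intro sum_mono) (simp add: a_def T_def W_def)
  also have "\<dots> = real (card (blowups G (Z # Zs) ss))"
    using card_blowups_Cons[of Z Zs G ss] Cons.prems by (simp add: ss L_def del: blowups.simps)
  finally show ?case
    using L by (simp add: ss T_def W_def power_mult ac_simps del: blowups.simps)
qed

section \<open>Homomorphisms respecting a partition into parts\<close>

definition partite_homs ::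
  "'b set \<Rightarrow> 'b set set \<Rightarrow> 'a set set \<Rightarrow> ('b \<Rightarrow> nat) \<Rightarrow> (nat \<Rightarrow> 'a set) \<Rightarrow> ('b \<Rightarrow> 'a) set" where
  "partite_homs VF EF E c Z = {\<phi> \<in> Pi\<^sub>E VF (\<lambda>v. Z (c v)). \<forall>e\<in>EF. \<phi> ` e \<in> E}"

lemma finite_partite_homs:
  assumes "finite VF" "\<And>v. v \<in> VF \<Longrightarrow> finite (Z (c v))"
  shows "finite (partite_homs VF EF E c Z)"
  by (rule finite_subset[OF _ finite_PiE[OF assms]]) (auto simp: partite_homs_def)

lemma kpartite_realisation_edge_eq_image:
  assumes "kpartite_realisation k VF EF c" "e \<in> EF" "e \<subseteq> VF"
  obtains w where "e = w ` {..<k}" "\<And>i. i < k \<Longrightarrow> w i \<in> e \<and> c (w i) = i"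
proof -
  have unique: "\<exists>!v. v \<in> e \<and> c v = i" if i: "i < k" for i
  proof -
    have "card {v\<in>e. c v = i} = 1" using assms i unfolding kpartite_realisation_def by blast
    then obtain x where "{v\<in>e. c v = i} = {x}" by (auto simp: card_1_singleton_iff)
    then show ?thesis by (metis (mono_tags, lifting) mem_Collect_eq singletonD singletonI)
  qed
  then obtain w where w: "\<And>i. i < k \<Longrightarrow> w i \<in> e \<and> c (w i) = i" by metis
  have "e = w ` {..<k}"
  proof
    show "e \<subseteq> w ` {..<k}"
    proof
      fix v assume "v \<in> e"
      then have "c v < k" using assms unfolding kpartite_realisation_def by auto
      then show "v \<in> w ` {..<k}" using unique w \<open>v \<in> e\<close> by blast
    qed
  qed (use w in auto)
  with w that show thesis by blast
qed

lemma obtain_class_enumeration: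
  assumes "finite V"
  obtains idx :: "'b \<Rightarrow> nat" where
    "\<And>v. v \<in> V \<Longrightarrow> idx v < card {u\<in>V. c u = c v}"
    "\<And>i j. j < card {u\<in>V. c u = i} \<Longrightarrow> \<exists>v\<in>V. c v = i \<and> idx v = j"
proof -
  have "\<exists>h. bij_betw h {u\<in>V. c u = i} {..<card {u\<in>V. c u = i}}" for i
    using assms ex_bij_betw_finite_nat[of "{u\<in>V. c u = i}"] by (auto simp: atLeast0LessThan)
  then obtain h where h: "\<And>i. bij_betw (h i) {u\<in>V. c u = i} {..<card {u\<in>V. c u = i}}" by metis
  show thesis
  proof
    show "h (c v) v < card {u\<in>V. c u = c v}" if "v \<in> V" for v
      using h[of "c v"] that by (auto dest: bij_betwE)
    show "\<exists>v\<in>V. c v = i \<and> h (c v) v = j" if "j < card {u\<in>V. c u = i}" for i j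
      using h[of i] that by (force simp: bij_betw_def)
  qed
qed

lemma sum_card_classes:
  fixes k :: nat
  assumes "finite VF" "\<And>v. v \<in> VF \<Longrightarrow> c v < k"
  shows "(\<Sum>i<k. card {v\<in>VF. c v = i}) = card VF"
proof -
  have "VF = (\<Union>i<k. {v\<in>VF. c v = i})" using assms(2) by auto
  moreover have "card (\<Union>i<k. {v\<in>VF. c v = i}) = (\<Sum>i<k. card {v\<in>VF. c v = i})"
    using assms(1) by (intro card_UN_disjoint) auto
  ultimately show ?thesis by simp
qed

lemma blowup_entries_in_partite_homs:
  assumes "is_kgraph k VF EF" "kpartite_realisation k VF EF c"
    and idx: "\<And>v. v \<in> VF \<Longrightarrow> idx v < card {u\<in>VF. c u = c v}"
    and g: "g \<in> blowups {ys \<in> listset (map Z [0..<k]). set ys \<in> E} (map Z [0..<k])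
                 (map (\<lambda>i. card {v\<in>VF. c v = i}) [0..<k])"
    (is "g \<in> blowups ?G ?Zs ?ss")
  shows "(\<lambda>v\<in>VF. g ! c v ! idx v) \<in> partite_homs VF EF E c Z"
proof -
  have VF: "\<And>e. e \<in> EF \<Longrightarrow> e \<subseteq> VF" "\<And>v. v \<in> VF \<Longrightarrow> c v < k"
    using assms(1,2) by (auto simp: is_kgraph_def kpartite_realisation_def)
  have len: "length ?ss = length ?Zs" by simp
  have words: "length g = k" "\<And>i. i < k \<Longrightarrow> g ! i \<in> words (Z i) (card {v\<in>VF. c v = i})"
    using transversals_in_blowups(1)[OF len g] by (auto simp: list_all2_conv_all_nth)
  have "(\<lambda>v\<in>VF. g ! c v ! idx v) ` e \<in> E" if e: "e \<in> EF" for e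
  proof -
    obtain w where w: "e = w ` {..<k}" "\<And>i. i < k \<Longrightarrow> w i \<in> e \<and> c (w i) = i"
      using kpartite_realisation_edge_eq_image[OF assms(2) e VF(1)[OF e]] by metis
    define \<sigma> where "\<sigma> = map (\<lambda>i. idx (w i)) [0..<k]"
    have "idx (w i) < card {v\<in>VF. c v = i}" if "i < k" for i
      using idx[of "w i"] w(2)[OF that] VF(1)[OF e] by auto
    then have "list_all2 (<) \<sigma> ?ss" by (simp add: \<sigma>_def list_all2_conv_all_nth)
    then have "map2 (!) g \<sigma> \<in> ?G" by (rule transversals_in_blowups(2)[OF len g])
    moreover have "map2 (!) g \<sigma> = map (\<lambda>i. g ! c (w i) ! idx (w i)) [0..<k]"
      using words(1) w by (intro nth_equalityI) (auto simp: \<sigma>_def)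
    moreover have "(\<lambda>v\<in>VF. g ! c v ! idx v) ` e = (\<lambda>v. g ! c v ! idx v) ` e"
      using VF(1)[OF e] by (intro image_cong) auto
    ultimately show ?thesis by (simp add: w(1) image_image atLeast0LessThan)
  qed
  moreover have "g ! c v ! idx v \<in> Z (c v)" if "v \<in> VF" for v
    using words(2)[OF VF(2)[OF that]] idx[OF that] by (auto simp: words_def)
  ultimately show ?thesis by (auto simp: partite_homs_def)
qed

lemma inj_on_blowup_entries:
  assumes idx_onto: "\<And>i j. j < card {u\<in>VF. c u = i} \<Longrightarrow> \<exists>v\<in>VF. c v = i \<and> idx v = j"
  shows "inj_on (\<lambda>g. \<lambda>v\<in>VF. g ! c v ! idx v)
           (blowups G (map Z [0..<k]) (map (\<lambda>i. card {v\<in>VF. c v = i}) [0..<k]))"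
    (is "inj_on ?Phi (blowups G ?Zs ?ss)")
proof (rule inj_onI)
  fix g h assume g: "g \<in> blowups G ?Zs ?ss" and h: "h \<in> blowups G ?Zs ?ss" and "?Phi g = ?Phi h"
  have words: "length g = k" "\<And>i. i < k \<Longrightarrow> g ! i \<in> words (Z i) (card {v\<in>VF. c v = i})"
    if "g \<in> blowups G ?Zs ?ss" for g
    using transversals_in_blowups(1)[OF _ that] by (auto simp: list_all2_conv_all_nth)
  have eq: "g ! c v ! idx v = h ! c v ! idx v" if "v \<in> VF" for v
    using fun_cong[OF \<open>?Phi g = ?Phi h\<close>, of v] that by (simp only: restrict_apply' that)
  show "g = h"
  proof (rule nth_equalityI)
    show "length g = length h" using words(1)[OF g] words(1)[OF h] by simp
    fix i assume "i < length g"
    then have i: "i < k" using words(1)[OF g] by simp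
    show "g ! i = h ! i"
    proof (rule nth_equalityI)
      show "length (g ! i) = length (h ! i)"
        using words(2)[OF g i] words(2)[OF h i] by (simp add: words_def)
      fix j assume "j < length (g ! i)"
      then obtain v where "v \<in> VF" "c v = i" "idx v = j"
        using idx_onto words(2)[OF g i] by (auto simp: words_def)
      then show "g ! i ! j = h ! i ! j" using eq by blast
    qed
  qed
qed

text \<open>Entry \<open>j\<close> of the \<open>i\<close>-th list of a blow-up becomes the image of the \<open>j\<close>-th vertex of
  class \<open>c\<^sup>-\<^sup>1(i)\<close>; this is a homomorphism because every edge of \<open>F\<close> is a transversal of
  the classes.\<close>
lemma card_blowups_le_card_partite_homs:
  fixes Z :: "nat \<Rightarrow> 'a set"
  assumes "is_kgraph k VF EF" "kpartite_realisation k VF EF c" "\<And>i. i < k \<Longrightarrow> finite (Z i)"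
  shows "card (blowups {ys \<in> listset (map Z [0..<k]). set ys \<in> E} (map Z [0..<k])
                 (map (\<lambda>i. card {v\<in>VF. c v = i}) [0..<k]))
         \<le> card (partite_homs VF EF E c Z)"
proof -
  have VF: "finite VF" "\<And>v. v \<in> VF \<Longrightarrow> c v < k"
    using assms(1,2) by (auto simp: is_kgraph_def kpartite_realisation_def)
  obtain idx where idx: "\<And>v. v \<in> VF \<Longrightarrow> idx v < card {u\<in>VF. c u = c v}"
    and idx_onto: "\<And>i j. j < card {u\<in>VF. c u = i} \<Longrightarrow> \<exists>v\<in>VF. c v = i \<and> idx v = j"
    using obtain_class_enumeration[OF VF(1)] by metis
  have "finite (partite_homs VF EF E c Z)"
    using VF assms(3) by (intro finite_partite_homs) auto
  then show ?thesis
    using blowup_entries_in_partite_homs[OF assms(1,2) idx]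
    by (intro card_inj_on_le[OF inj_on_blowup_entries[OF idx_onto]]) auto
qed

lemma npmu_graph_density_ge:
  assumes H: "npmu_graph k n p \<mu> V E"
    and Z: "\<forall>i<k. Z i \<subseteq> V \<and> \<zeta> * real n \<le> real (card (Z i))"
    and "0 < p" "0 < \<zeta>" "1 \<le> n" "\<mu> \<le> p / 2 * \<zeta> ^ k"
  shows "p / 2 \<le> density {ys \<in> listset (map Z [0..<k]). set ys \<in> E} (map Z [0..<k])"
proof -
  define Pr where "Pr = (\<Prod>i<k. real (card (Z i)))"
  have "(\<Prod>i<k. \<zeta> * real n) \<le> Pr"
    unfolding Pr_def using Z assms by (intro prod_mono) auto
  then have Pr_ge: "(\<zeta> * real n) ^ k \<le> Pr" by simp
  moreover have "0 < (\<zeta> * real n) ^ k" using assms by simp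
  ultimately have Pr_pos: "0 < Pr" by linarith
  have "\<mu> * real n ^ k \<le> p / 2 * \<zeta> ^ k * real n ^ k"
    using assms(6) by (rule mult_right_mono) simp
  also have "\<dots> \<le> p / 2 * Pr"
    using Pr_ge \<open>0 < p\<close> by (simp add: power_mult_distrib mult.assoc)
  finally have mu: "\<mu> * real n ^ k \<le> p / 2 * Pr" .
  have "p * Pr - \<mu> * real n ^ k \<le> real (card {x \<in> Pi\<^sub>E {..<k} Z. x ` {..<k} \<in> E})"
    using H Z unfolding npmu_graph_def Pr_def by auto
  also have "\<dots> = real (card {ys \<in> listset (map Z [0..<k]). set ys \<in> E})"
    using card_listset_filter_set_eq_card_PiE[where P = "\<lambda>S. S \<in> E"] by simp
  finally show ?thesis
    using Pr_pos mu by (simp add: density_def card_listset prod_list_map_upt_eq_prod_lessThan Pr_def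
        Int_absorb2 o_def field_simps)
qed

lemma card_partite_homs_ge:
  assumes F: "is_kgraph k VF EF" "kpartite_realisation k VF EF c"
    and H: "npmu_graph k n p \<mu> V E"
    and Z: "\<forall>i<k. Z i \<subseteq> V \<and> \<zeta> * real n \<le> real (card (Z i))"
    and "0 < p" "0 < \<zeta>" "1 \<le> n" "\<mu> \<le> p / 2 * \<zeta> ^ k"
  shows "(p / 2) ^ (card VF ^ k) * (\<zeta> * real n) ^ card VF \<le> real (card (partite_homs VF EF E c Z))"
proof -
  define s where "s = (\<lambda>i. card {v\<in>VF. c v = i})"
  define G where "G = {ys \<in> listset (map Z [0..<k]). set ys \<in> E}"
  define d where "d = density G (map Z [0..<k])"
  have VF: "finite VF" "\<And>v. v \<in> VF \<Longrightarrow> c v < k"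
    using F by (auto simp: is_kgraph_def kpartite_realisation_def)
  have Z_fin: "\<forall>Z'\<in>set (map Z [0..<k]). finite Z' \<and> Z' \<noteq> {}"
  proof -
    have "finite V" using H by (simp add: npmu_graph_def is_kgraph_def)
    moreover have "0 < real (card (Z i))" if "i < k" for i
      using Z that assms by (smt (verit) mult_pos_pos of_nat_0_less_iff of_nat_1 of_nat_mono)
    ultimately show ?thesis by (auto simp: card_gt_0_iff)
  qed
  have d: "p / 2 \<le> d" "d \<le> 1"
    using npmu_graph_density_ge[OF H Z assms(5-8)] density_le_1[where Zs = "map Z [0..<k]" and G = G] Z_fin
    by (auto simp: d_def G_def finite_listset)
  have "(\<Prod>i<k. s i) \<le> (\<Prod>i<k. card VF)"
    using VF(1) by (intro prod_mono) (auto simp: s_def intro: card_mono)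
  then have "prod_list (map s [0..<k]) \<le> card VF ^ k"
    by (simp add: prod_list_map_upt_eq_prod_lessThan)
  then have "(p / 2) ^ (card VF ^ k) \<le> d ^ prod_list (map s [0..<k])"
    using d \<open>0 < p\<close> by (meson order_trans power_decreasing power_mono less_imp_le half_gt_zero)
  moreover have "(\<zeta> * real n) ^ card VF \<le> (\<Prod>(Z', s')\<leftarrow>zip (map Z [0..<k]) (map s [0..<k]). real (card Z') ^ s')"
  proof -
    have "(\<zeta> * real n) ^ card VF = (\<Prod>i<k. (\<zeta> * real n) ^ s i)"
      using sum_card_classes[where c = c and k = k, OF VF] by (simp add: s_def flip: power_sum)
    also have "\<dots> \<le> (\<Prod>i<k. real (card (Z i)) ^ s i)"
      using Z assms by (intro prod_mono) (auto intro: power_mono)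
    finally show ?thesis
      by (simp add: zip_map_map zip_same_conv_map o_def prod_list_map_upt_eq_prod_lessThan)
  qed
  ultimately have "(p / 2) ^ (card VF ^ k) * (\<zeta> * real n) ^ card VF
      \<le> d ^ prod_list (map s [0..<k]) * (\<Prod>(Z', s')\<leftarrow>zip (map Z [0..<k]) (map s [0..<k]). real (card Z') ^ s')"
    using assms d by (intro mult_mono) auto
  also have "\<dots> \<le> real (card (blowups G (map Z [0..<k]) (map s [0..<k])))"
    unfolding d_def by (rule density_power_mult_le_card_blowups) (use Z_fin in auto)
  also have "\<dots> \<le> real (card (partite_homs VF EF E c Z))"
    using card_blowups_le_card_partite_homs[OF F, of Z E] Z_fin by (simp add: G_def s_def)
  finally show ?thesis .
qed

section \<open>From homomorphisms to copies\<close>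

lemma card_le_card_image_mult:
  assumes "finite A" "\<And>y. y \<in> h ` A \<Longrightarrow> card {x\<in>A. h x = y} \<le> K"
  shows "card A \<le> card (h ` A) * K"
proof -
  have "card A = card (\<Union>y\<in>h ` A. {x\<in>A. h x = y})" by (rule arg_cong[of _ _ card]) auto
  also have "\<dots> \<le> (\<Sum>y\<in>h ` A. card {x\<in>A. h x = y})" using assms(1) by (intro card_UN_le) simp
  also have "\<dots> \<le> (\<Sum>y\<in>h ` A. K)" using assms(2) by (intro sum_mono) auto
  finally show ?thesis by simp
qed

lemma card_PiE_collision_le:
  assumes "finite VF" "finite V" "u \<in> VF" "v \<in> VF" "u \<noteq> v"
  shows "card {\<phi> \<in> Pi\<^sub>E VF (\<lambda>_. V). \<phi> u = \<phi> v} \<le> card V ^ (card VF - 1)"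
proof -
  let ?B = "{\<phi> \<in> Pi\<^sub>E VF (\<lambda>_. V). \<phi> u = \<phi> v}"
  have "inj_on (\<lambda>\<phi>. restrict \<phi> (VF - {u})) ?B"
  proof (rule inj_onI)
    fix \<phi> \<psi> assume \<phi>: "\<phi> \<in> ?B" and \<psi>: "\<psi> \<in> ?B" and eq: "restrict \<phi> (VF - {u}) = restrict \<psi> (VF - {u})"
    have "\<phi> w = \<psi> w" if "w \<in> VF - {u}" for w using fun_cong[OF eq, of w] that by simp
    then have agree: "\<phi> w = \<psi> w" if "w \<in> VF" for w
      using that \<phi> \<psi> assms(4,5) by (cases "w = u") auto
    have "\<phi> \<in> Pi\<^sub>E VF (\<lambda>_. V)" "\<psi> \<in> Pi\<^sub>E VF (\<lambda>_. V)" using \<phi> \<psi> by auto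
    then show "\<phi> = \<psi>" using agree by (rule PiE_ext)
  qed
  moreover have "(\<lambda>\<phi>. restrict \<phi> (VF - {u})) ` ?B \<subseteq> Pi\<^sub>E (VF - {u}) (\<lambda>_. V)"
    by (intro image_subsetI) (auto simp: restrict_PiE_iff)
  ultimately have "card ?B \<le> card (Pi\<^sub>E (VF - {u}) (\<lambda>_. V))"
    using assms by (intro card_inj_on_le) (auto intro: finite_PiE)
  also have "\<dots> = card V ^ (card VF - 1)" using assms by (simp add: card_PiE)
  finally show ?thesis .
qed

lemma card_non_inj_PiE_le:
  assumes "finite VF" "finite V"
  shows "card {\<phi> \<in> Pi\<^sub>E VF (\<lambda>_. V). \<not> inj_on \<phi> VF} \<le> card VF ^ 2 * card V ^ (card VF - 1)"
proof -
  define I where "I = {(u, v) \<in> VF \<times> VF. u \<noteq> v}"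
  define B where "B = (\<lambda>(u, v). {\<phi> \<in> Pi\<^sub>E VF (\<lambda>_. V). \<phi> u = \<phi> v})"
  have "I \<subseteq> VF \<times> VF" by (auto simp: I_def)
  then have I: "finite I" "card I \<le> card VF ^ 2"
    using assms(1) card_mono[of "VF \<times> VF" I]
    by (auto simp: card_cartesian_product power2_eq_square intro: finite_subset)
  have "finite (B uv)" for uv
    using finite_PiE[of VF "\<lambda>_. V"] assms by (auto simp: B_def split: prod.split)
  then have "card {\<phi> \<in> Pi\<^sub>E VF (\<lambda>_. V). \<not> inj_on \<phi> VF} \<le> card (\<Union>uv\<in>I. B uv)"
    using I(1) by (intro card_mono) (auto simp: I_def B_def inj_on_def)
  also have "\<dots> \<le> (\<Sum>uv\<in>I. card (B uv))"
    using I(1) by (rule card_UN_le)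
  also have "\<dots> \<le> (\<Sum>uv\<in>I. card V ^ (card VF - 1))"
    using card_PiE_collision_le[OF assms] by (intro sum_mono) (auto simp: I_def B_def)
  also have "\<dots> \<le> card VF ^ 2 * card V ^ (card VF - 1)" using I(2) by simp
  finally show ?thesis .
qed

lemma card_partite_homs_le_card_inj_add:
  assumes "finite VF" "finite V" "\<And>v. v \<in> VF \<Longrightarrow> Z (c v) \<subseteq> V"
  shows "card (partite_homs VF EF E c Z)
    \<le> card {\<phi> \<in> partite_homs VF EF E c Z. inj_on \<phi> VF} + card VF ^ 2 * card V ^ (card VF - 1)"
    (is "card ?A \<le> card ?I + _")
proof -
  let ?N = "{\<phi> \<in> Pi\<^sub>E VF (\<lambda>_. V). \<not> inj_on \<phi> VF}"
  have sub: "?A \<subseteq> Pi\<^sub>E VF (\<lambda>_. V)"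
    using PiE_mono[of VF "\<lambda>v. Z (c v)" "\<lambda>_. V"] assms(3) by (auto simp: partite_homs_def)
  have fin_PiE: "finite (Pi\<^sub>E VF (\<lambda>_. V))" using assms(1,2) by (simp add: finite_PiE)
  have "finite ?A" using sub fin_PiE by (rule finite_subset)
  moreover have "finite ?N" using fin_PiE by (rule rev_finite_subset) auto
  ultimately have "card ?A \<le> card (?I \<union> ?N)" using sub by (intro card_mono) auto
  also have "\<dots> \<le> card ?I + card ?N" by (rule card_Un_le)
  also have "\<dots> \<le> card ?I + card VF ^ 2 * card V ^ (card VF - 1)"
    using card_non_inj_PiE_le[OF assms(1,2)] by simp
  finally show ?thesis .
qed

lemma card_inj_partite_homs_le_card_copies:
  fixes X Y :: "'a set" and c :: "'b \<Rightarrow> nat" and J :: "nat set"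
  assumes "finite VF" "finite V" "\<forall>e\<in>E. e \<subseteq> V" "X \<union> Y = V" "X \<inter> Y = {}"
  defines "a \<equiv> card {v\<in>VF. c v \<in> J}"
  shows "card {\<phi> \<in> partite_homs VF EF E c (\<lambda>i. if i \<in> J then X else Y). inj_on \<phi> VF}
    \<le> card {F' \<in> copies VF EF V E. card (fst F' \<inter> X) = a \<and> card (fst F' \<inter> Y) = card VF - a}
        * card VF ^ card VF"
    (is "card ?A \<le> card ?C * _")
proof -
  define cp where "cp \<phi> = (\<phi> ` VF, (\<lambda>e. \<phi> ` e) ` EF)" for \<phi> :: "'b \<Rightarrow> 'a"
  have cp: "cp \<phi> \<in> ?C" if "\<phi> \<in> ?A" for \<phi>
  proof -
    have \<phi>: "\<phi> \<in> Pi\<^sub>E VF (\<lambda>v. if c v \<in> J then X else Y)" "\<forall>e\<in>EF. \<phi> ` e \<in> E" "inj_on \<phi> VF"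
      using that by (auto simp: partite_homs_def)
    then have "\<phi> ` VF \<inter> X = \<phi> ` {v\<in>VF. c v \<in> J}" "\<phi> ` VF \<inter> Y = \<phi> ` (VF - {v\<in>VF. c v \<in> J})"
      using assms(5) by (fastforce split: if_splits)+
    moreover have "cp \<phi> \<in> copies VF EF V E"
      using \<phi> assms(4) by (auto simp: copies_def cp_def bij_betw_def split: if_splits)
    ultimately show ?thesis
      using \<phi>(3) assms(1)
      by (simp add: cp_def a_def card_image inj_on_subset card_Diff_subset)
  qed
  have "finite ?C"
  proof (rule finite_subset)
    show "?C \<subseteq> Pow V \<times> Pow E" by (auto simp: copies_def)
    show "finite (Pow V \<times> Pow E)" using assms(2,3) by (simp add: finite_subset[of E "Pow V"] subsetI)
  qed
  have fibre: "card {\<phi> \<in> ?A. cp \<phi> = C} \<le> card VF ^ card VF" if image: "C \<in> cp ` ?A" for C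
  proof -
    obtain \<phi>0 where "\<phi>0 \<in> ?A" "C = cp \<phi>0" using image by blast
    then have C: "finite (fst C)" "card (fst C) = card VF"
      using assms(1) by (auto simp: cp_def card_image)
    have "{\<phi> \<in> ?A. cp \<phi> = C} \<subseteq> Pi\<^sub>E VF (\<lambda>_. fst C)"
      by (auto simp: partite_homs_def cp_def)
    then have "card {\<phi> \<in> ?A. cp \<phi> = C} \<le> card (Pi\<^sub>E VF (\<lambda>_. fst C))"
      using assms(1) C by (intro card_mono) (auto intro: finite_PiE)
    also have "\<dots> = card VF ^ card VF" using assms(1) C by (simp add: card_PiE)
    finally show ?thesis .
  qed
  have "finite (partite_homs VF EF E c (\<lambda>i. if i \<in> J then X else Y))"
    using assms(1,2,4) by (intro finite_partite_homs) auto
  then have "finite ?A" by simp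
  then have "card ?A \<le> card (cp ` ?A) * card VF ^ card VF"
    using fibre by (rule card_le_card_image_mult)
  also have "\<dots> \<le> card ?C * card VF ^ card VF"
    using cp \<open>finite ?C\<close> by (intro mult_right_mono card_mono) auto
  finally show ?thesis .
qed

lemma card_copies_with_class_profile_ge:
  assumes F: "is_kgraph k VF EF" "kpartite_realisation k VF EF c"
    and H: "npmu_graph k n p \<mu> V E"
    and XY: "X \<union> Y = V" "X \<inter> Y = {}" "\<zeta> * real n \<le> real (card X)" "\<zeta> * real n \<le> real (card Y)"
    and "0 < p" "0 < \<zeta>" "1 \<le> n" "\<mu> \<le> p / 2 * \<zeta> ^ k"
    and large: "real (card VF) ^ 2 \<le> (p / 2) ^ (card VF ^ k) * \<zeta> ^ card VF / 2 * real n"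
  shows "(p / 2) ^ (card VF ^ k) * \<zeta> ^ card VF / (2 * real (card VF) ^ card VF) * real n ^ card VF
     \<le> real (card {F' \<in> copies VF EF V E. card (fst F' \<inter> X) = card {v\<in>VF. c v \<in> J}
            \<and> card (fst F' \<inter> Y) = card VF - card {v\<in>VF. c v \<in> J}})"
    (is "_ \<le> real (card ?C)")
proof -
  define f where "f = card VF"
  define D where "D = (p / 2) ^ (f ^ k) * \<zeta> ^ f"
  define Z where "Z = (\<lambda>i. if i \<in> J then X else Y)"
  let ?A = "partite_homs VF EF E c Z"
  have fin: "finite VF" "finite V" "card V = n" "\<forall>e\<in>E. e \<subseteq> V"
    using F(1) H by (auto simp: is_kgraph_def npmu_graph_def)
  have Z: "\<forall>i<k. Z i \<subseteq> V \<and> \<zeta> * real n \<le> real (card (Z i))"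
    using XY by (auto simp: Z_def)
  have homs: "D * real n ^ f \<le> real (card ?A)"
    using card_partite_homs_ge[OF F H Z assms(8-11)]
    by (simp add: Z_def D_def f_def power_mult_distrib mult.assoc)
  have split: "real (card ?A) \<le> real (card {\<phi> \<in> ?A. inj_on \<phi> VF}) + real f ^ 2 * real n ^ (f - 1)"
  proof -
    have "Z (c v) \<subseteq> V" for v using XY(1) by (auto simp: Z_def)
    then show ?thesis
      using card_partite_homs_le_card_inj_add[OF fin(1,2), of Z c EF E] fin(3) unfolding f_def
      by (simp flip: of_nat_power of_nat_mult of_nat_add)
  qed
  have small: "real f ^ 2 * real n ^ (f - 1) \<le> D / 2 * real n ^ f"
  proof (cases "f = 0")
    case False
    then have "real n ^ f = real n * real n ^ (f - 1)" by (simp add: power_eq_if)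
    have "real f ^ 2 * real n ^ (f - 1) \<le> (D / 2 * real n) * real n ^ (f - 1)"
      using large by (intro mult_right_mono) (simp_all add: D_def f_def)
    with \<open>real n ^ f = _\<close> show ?thesis by (simp add: ac_simps)
  qed (use \<open>0 < p\<close> in \<open>simp add: D_def\<close>)
  from homs split small
  have "D / 2 * real n ^ f \<le> real (card {\<phi> \<in> ?A. inj_on \<phi> VF})" by linarith
  also have "\<dots> \<le> real (card ?C) * real f ^ f"
    using card_inj_partite_homs_le_card_copies[OF fin(1,2,4) XY(1,2), of EF c J]
    unfolding Z_def f_def by (simp flip: of_nat_power of_nat_mult)
  finally have "D / 2 * real n ^ f \<le> real (card ?C) * real f ^ f" .
  moreover have "0 < real f ^ f" by (cases "f = 0") auto
  ultimately show ?thesis by (simp add: D_def f_def field_simps)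
qed

section \<open>Robust vectors and the lattice\<close>

lemma int_lattice_base: "v \<in> S \<Longrightarrow> v \<in> int_lattice S"
  unfolding int_lattice_def by (intro CollectI exI[of _ "{v}"] exI[of _ "\<lambda>_. 1"]) auto

lemma int_lattice_diff:
  assumes "(a, b) \<in> int_lattice S" "(a', b') \<in> int_lattice S"
  shows "(a - a', b - b') \<in> int_lattice S"
proof -
  obtain T c where T: "finite T" "T \<subseteq> S" "a = (\<Sum>v\<in>T. c v * fst v)" "b = (\<Sum>v\<in>T. c v * snd v)"
    using assms(1) unfolding int_lattice_def by auto
  obtain T' c' where T': "finite T'" "T' \<subseteq> S" "a' = (\<Sum>v\<in>T'. c' v * fst v)" "b' = (\<Sum>v\<in>T'. c' v * snd v)"
    using assms(2) unfolding int_lattice_def by auto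
  define d where "d v = (if v \<in> T then c v else 0) - (if v \<in> T' then c' v else 0)" for v
  have extend: "(\<Sum>v\<in>U. c v * g v) = (\<Sum>v\<in>T \<union> T'. (if v \<in> U then c v else 0) * g v)"
    if "U \<subseteq> T \<union> T'" for U and c g :: "int \<times> int \<Rightarrow> int"
    using that T(1) T'(1) by (intro sum.mono_neutral_cong_left) auto
  have "a - a' = (\<Sum>v\<in>T \<union> T'. d v * fst v)" "b - b' = (\<Sum>v\<in>T \<union> T'. d v * snd v)"
    unfolding T(3,4) T'(3,4) d_def
    by (subst (1 2) extend; simp add: left_diff_distrib sum_subtractf)+
  then show ?thesis
    unfolding int_lattice_def using T T' by blast
qed

lemma one_neg_one_in_int_lattice_if_Gcd_eq_1:
  assumes "Gcd (S :: nat set) = 1" "\<And>s. s \<in> S \<Longrightarrow> (int s, - int s) \<in> int_lattice R"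
  shows "(1, -1) \<in> int_lattice R"
proof -
  have "(m, - m) \<in> int_lattice R" if "m \<in> group_closure (int ` S)" for m
    using that
  proof induction
    case (base m)
    moreover have "(0, 0) \<in> int_lattice R" unfolding int_lattice_def by force
    ultimately show ?case using assms(2) by auto
  next
    case (diff m m')
    then show ?case using int_lattice_diff[OF diff.IH] by simp
  qed
  from this[OF Gcd_in_group_closure] show ?thesis
    using assms(1) by simp
qed

lemma one_neg_one_in_int_lattice_if_class_profiles_in:
  assumes "Gcd (class_sizes k VF EF) = 1" "finite VF"
    and profile: "\<And>c J. kpartite_realisation k VF EF c \<Longrightarrow>
      (int (card {v\<in>VF. c v \<in> J}), int (card VF - card {v\<in>VF. c v \<in> J})) \<in> R"
  shows "(1, -1) \<in> int_lattice R"
proof (rule one_neg_one_in_int_lattice_if_Gcd_eq_1[OF assms(1)])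
  fix s assume "s \<in> class_sizes k VF EF"
  then obtain c i where c: "kpartite_realisation k VF EF c" and s: "s = card {v\<in>VF. c v \<in> {i}}"
    unfolding class_sizes_def by auto
  have "s \<le> card VF" unfolding s using assms(2) by (intro card_mono) auto
  moreover have "(int s, int (card VF - s)) \<in> int_lattice R" "(0, int (card VF)) \<in> int_lattice R"
    using profile[OF c, of "{i}"] profile[OF c, of "{}"] s by (auto intro: int_lattice_base)
  ultimately show "(int s, - int s) \<in> int_lattice R"
    using int_lattice_diff by fastforce
qed

lemma class_profile_in_robust_vectors:
  assumes F: "is_kgraph k VF EF" "kpartite_realisation k VF EF c"
    and H: "npmu_graph k n p \<mu> V E"
    and XY: "X \<union> Y = V" "X \<inter> Y = {}" "\<zeta> * real n \<le> real (card X)" "\<zeta> * real n \<le> real (card Y)"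
    and "0 < p" "0 < \<zeta>" "1 \<le> n" "\<mu> \<le> p / 2 * \<zeta> ^ k"
    and "real (card VF) ^ 2 \<le> (p / 2) ^ (card VF ^ k) * \<zeta> ^ card VF / 2 * real n"
    and lam: "lam \<le> (p / 2) ^ (card VF ^ k) * \<zeta> ^ card VF / (2 * real (card VF) ^ card VF)"
  shows "(int (card {v\<in>VF. c v \<in> J}), int (card VF - card {v\<in>VF. c v \<in> J}))
           \<in> robust_vectors lam VF EF V E X Y"
proof -
  define a where "a = card {v\<in>VF. c v \<in> J}"
  have "finite VF" "card V = n" using F(1) H by (auto simp: is_kgraph_def npmu_graph_def)
  then have "a \<le> card VF" unfolding a_def by (intro card_mono) auto
  have "lam * real (card V) ^ card VF
      \<le> (p / 2) ^ (card VF ^ k) * \<zeta> ^ card VF / (2 * real (card VF) ^ card VF) * real n ^ card VF"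
    unfolding \<open>card V = n\<close> by (intro mult_right_mono[OF lam]) simp
  also have "\<dots> \<le> real (card {F' \<in> copies VF EF V E. card (fst F' \<inter> X) = a \<and> card (fst F' \<inter> Y) = card VF - a})"
    unfolding a_def by (rule card_copies_with_class_profile_ge) (use assms in auto)
  finally show ?thesis
    using \<open>a \<le> card VF\<close> unfolding robust_vectors_def a_def[symmetric]
    by (intro CollectI exI[of _ a] exI[of _ "card VF - a"]) auto
qed

lemma one_neg_one_in_int_lattice_robust_vectors:
  assumes F: "is_kgraph k VF EF" "Gcd (class_sizes k VF EF) = 1"
    and H: "npmu_graph k n p \<mu> V E"
    and XY: "X \<union> Y = V" "X \<inter> Y = {}" "\<zeta> * real n \<le> real (card X)" "\<zeta> * real n \<le> real (card Y)"
    and "0 < p" "0 < \<zeta>" "1 \<le> n" "\<mu> \<le> p / 2 * \<zeta> ^ k"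
    and "real (card VF) ^ 2 \<le> (p / 2) ^ (card VF ^ k) * \<zeta> ^ card VF / 2 * real n"
    and "lam \<le> (p / 2) ^ (card VF ^ k) * \<zeta> ^ card VF / (2 * real (card VF) ^ card VF)"
  shows "(1, -1) \<in> int_lattice (robust_vectors lam VF EF V E X Y)"
proof (rule one_neg_one_in_int_lattice_if_class_profiles_in[OF F(2)])
  show "finite VF" using F(1) by (simp add: is_kgraph_def)
  show "(int (card {v\<in>VF. c v \<in> J}), int (card VF - card {v\<in>VF. c v \<in> J}))
      \<in> robust_vectors lam VF EF V E X Y" if "kpartite_realisation k VF EF c" for c J
    by (rule class_profile_in_robust_vectors[OF F(1) that H XY]) (use assms in auto)
qed

theorem mainTheorem16:
  fixes k :: nat and VF :: "'b set" and EF :: "'b set set"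
  assumes "k \<ge> 2"
    and "is_kgraph k VF EF"
    and "is_kpartite k VF EF"
    and "Gcd (class_sizes k VF EF) = 1"
  shows "\<forall>p \<zeta>. 0 < p \<and> p < 1 \<and> 0 < \<zeta> \<and> \<zeta> < 1 \<longrightarrow>
    (\<exists>lam0>0. \<forall>lam. 0 < lam \<and> lam \<le> lam0 \<longrightarrow>
      (\<exists>\<mu>0>0. \<forall>\<mu>. 0 < \<mu> \<and> \<mu> \<le> \<mu>0 \<longrightarrow>
        (\<exists>n0. \<forall>n \<ge> n0. \<forall>(V :: nat set) E X Y.
            npmu_graph k n p \<mu> V E \<and> X \<union> Y = V \<and> X \<inter> Y = {} \<and>
            real (card X) \<ge> \<zeta> * real n \<and> real (card Y) \<ge> \<zeta> * real n \<longrightarrow>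
            (1, -1) \<in> int_lattice (robust_vectors lam VF EF V E X Y))))"
proof (intro allI impI, goal_cases)
  case (1 p \<zeta>)
  define D where "D = (p / 2) ^ (card VF ^ k) * \<zeta> ^ card VF"
  define n0 where "n0 = nat \<lceil>2 * real (card VF) ^ 2 / D\<rceil> + 1"
  have "0 < D" "0 < real (card VF) ^ card VF" using 1 by (auto simp: D_def power_0_left)
  then have "0 < D / (2 * real (card VF) ^ card VF)" "0 < p / 2 * \<zeta> ^ k" using 1 by auto
  moreover have "1 \<le> n \<and> real (card VF) ^ 2 \<le> D / 2 * real n" if "n0 \<le> n" for n
  proof -
    have "2 * real (card VF) ^ 2 / D \<le> real n" using that by (simp add: n0_def) linarith
    then show ?thesis using \<open>0 < D\<close> that by (simp add: n0_def field_simps)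
  qed
  ultimately show ?case
    using one_neg_one_in_int_lattice_robust_vectors[OF assms(2,4)] 1 unfolding D_def by blast
qed

end
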